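(* Let $A,B$ be real symmetric $n\times n$ matrices, $f,g\in\mathbb{R}^n$, $\mu\in\mathbb{R}$, and consider the problem (QP1QC): $\inf\, x^TAx-2f^Tx$ subject to $x^TBx-2g^Tx\le\mu$. Suppose the primal Slater condition holds (there exists $x_0$ with $x_0^TBx_0-2g^Tx_0<\mu$), the optimal value of (QP1QC) is finite, and $I_{\succeq}(A,B)=\{\sigma\in\mathbb{R}: A+\sigma B\succeq 0\}$ is an interval containing more than one point. Then the infimum of (QP1QC) is attained.
   Context: $A+\sigma B\succeq 0$ means positive semidefinite. *)

theory Defs
  imports "HOL-Analysis.Analysis"
begin

definition psd :: "real^'n^'n \<Rightarrow> bool" where
  "psd M \<longleftrightarrow> (\<forall>x. 0 \<le> x \<bullet> (M *v x))"

definition symmetric_mat :: "real^'n^'n \<Rightarrow> bool" where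
  "symmetric_mat M \<longleftrightarrow> transpose M = M"

definition I_psd :: "real^'n^'n \<Rightarrow> real^'n^'n \<Rightarrow> real set" where
  "I_psd A B = {\<sigma>. psd (A + \<sigma> *\<^sub>R B)}"

definition qform :: "real^'n^'n \<Rightarrow> real^'n \<Rightarrow> real^'n \<Rightarrow> real" where
  "qform M h x = x \<bullet> (M *v x) - 2 * (h \<bullet> x)"

end

theory Submission
  imports Defs
begin

text \<open>
  Write q and c for the objective and the constraint function and K for the common kernel
  of A and B. There are three cases. If some d has A d = 0, f \<bullet> d = 0 and d \<bullet> B d < 0, then
  moving along d leaves q unchanged and eventually makes every point feasible, so q is bounded
  below on all of R^n and an unconstrained minimizer can be shifted into the feasible set.
  If some w \<in> K has g \<bullet> w \<noteq> 0, then moving along w changes c freely and q linearly with a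
  slope \<gamma> \<ge> 0, and a minimizer of the Lagrangian q + \<gamma> c moved onto the boundary c = \<mu> solves
  the problem. Otherwise q and c are invariant under translation by K, and since A + s B and
  A + t B are PSD for some s \<noteq> t, no nonzero v orthogonal to K has v \<bullet> A v = 0 and
  v \<bullet> B v \<le> 0; by compactness of the unit sphere this gives
  max |v \<bullet> A v| (v \<bullet> B v) \<ge> \<epsilon> |v|^2, so the feasible sublevel sets of q within the
  orthogonal complement of K are compact and q attains its minimum there.
\<close>

lemma symmetric_mat_inner_commute:
  fixes M :: "real^'n^'n"
  assumes "symmetric_mat M"
  shows "x \<bullet> (M *v y) = y \<bullet> (M *v x)"
proof -
  have "x \<bullet> (M *v y) = (x v* M) \<bullet> y" by (simp add: dot_lmul_matrix)
  also have "x v* M = M *v x"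
    using assms unfolding symmetric_mat_def by (metis vector_transpose_matrix)
  finally show ?thesis by (simp add: inner_commute)
qed

lemma symmetric_mat_add_scaleR:
  assumes "symmetric_mat A" "symmetric_mat B"
  shows "symmetric_mat (A + s *\<^sub>R B)"
  using assms unfolding symmetric_mat_def transpose_def by (simp add: vec_eq_iff)

lemma inner_add_scaleR_matrix:
  fixes A B :: "real^'n^'n"
  shows "x \<bullet> ((A + s *\<^sub>R B) *v x) = x \<bullet> (A *v x) + s * (x \<bullet> (B *v x))"
  by (simp add: matrix_vector_mult_add_rdistrib inner_add_right
      scaleR_matrix_vector_assoc[symmetric])

lemma psd_isotropic_imp_kernel:
  fixes M :: "real^'n^'n"
  assumes sym: "symmetric_mat M" and "psd M" and iso: "x \<bullet> (M *v x) = 0"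
  shows "M *v x = 0"
proof (rule ccontr)
  assume "M *v x \<noteq> 0"
  define y where "y = M *v x"
  define k where "k = y \<bullet> (M *v y)"
  define l where "l = (y \<bullet> y) / (k + 1)"
  have "y \<bullet> y > 0" "k \<ge> 0"
    using \<open>M *v x \<noteq> 0\<close> \<open>psd M\<close> unfolding y_def k_def psd_def by auto
  then have "l > 0" "l * k < y \<bullet> y" unfolding l_def by (auto simp: field_simps)
  have "x \<bullet> (M *v y) = y \<bullet> y"
    using symmetric_mat_inner_commute[OF sym, of x y] unfolding y_def by simp
  then have "(x - l *\<^sub>R y) \<bullet> (M *v (x - l *\<^sub>R y)) = l * (l * k - 2 * (y \<bullet> y))"
    using iso unfolding k_def y_def
    by (simp add: algebra_simps inner_diff_left inner_diff_right)
  also have "\<dots> < 0"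
    using \<open>l * k < y \<bullet> y\<close> \<open>y \<bullet> y > 0\<close> by (intro mult_pos_neg[OF \<open>l > 0\<close>]) linarith
  finally show False using \<open>psd M\<close> unfolding psd_def by (metis not_le)
qed

lemma psd_pair_isotropic_imp_kernel:
  fixes A B :: "real^'n^'n"
  assumes "symmetric_mat A" "symmetric_mat B" "s \<noteq> t"
    and "psd (A + s *\<^sub>R B)" "psd (A + t *\<^sub>R B)"
    and "x \<bullet> (A *v x) = 0" "x \<bullet> (B *v x) = 0"
  shows "A *v x = 0 \<and> B *v x = 0"
proof -
  have "(A + r *\<^sub>R B) *v x = 0" if "psd (A + r *\<^sub>R B)" for r
    using psd_isotropic_imp_kernel[OF symmetric_mat_add_scaleR[OF assms(1,2)] that]
    by (simp add: inner_add_scaleR_matrix assms(6,7))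
  then have "A *v x + s *\<^sub>R (B *v x) = 0" "A *v x + t *\<^sub>R (B *v x) = 0"
    using assms(4,5) by (simp_all add: algebra_simps scaleR_matrix_vector_assoc[symmetric])
  moreover have "(s - t) *\<^sub>R (B *v x) = (A *v x + s *\<^sub>R (B *v x)) - (A *v x + t *\<^sub>R (B *v x))"
    by (simp add: algebra_simps)
  ultimately have "(s - t) *\<^sub>R (B *v x) = 0" by simp
  then have "B *v x = 0" using \<open>s \<noteq> t\<close> by simp
  with \<open>A *v x + s *\<^sub>R (B *v x) = 0\<close> show ?thesis by simp
qed

lemma qform_add_scaleR:
  fixes M :: "real^'n^'n"
  assumes "symmetric_mat M"
  shows "qform M h (x + l *\<^sub>R d) =
    qform M h x + 2 * l * (d \<bullet> (M *v x) - h \<bullet> d) + l\<^sup>2 * (d \<bullet> (M *v d))"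
  using symmetric_mat_inner_commute[OF assms, of x d] unfolding qform_def
  by (simp add: algebra_simps inner_add_left inner_add_right power2_eq_square)

lemma qform_add_kernel:
  fixes M :: "real^'n^'n"
  assumes "symmetric_mat M" "M *v k = 0"
  shows "qform M h (x + k) = qform M h x - 2 * (h \<bullet> k)"
  using qform_add_scaleR[OF assms(1), of h x 1 k] assms(2)
    symmetric_mat_inner_commute[OF assms(1), of k x] by simp

lemma qform_add_scaleR_matrix:
  fixes A B :: "real^'n^'n"
  shows   "qform (A + s *\<^sub>R B) (f + s *\<^sub>R g) x = qform A f x + s * qform B g x"
  unfolding qform_def
  by (simp add: algebra_simps inner_add_left inner_add_right scaleR_matrix_vector_assoc[symmetric])

lemma continuous_on_qform: "continuous_on S (qform M h)"
  unfolding qform_def by (intro continuous_intros)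

lemma closed_orthogonal_set: "closed {v::'a::real_inner. \<forall>w\<in>K. v \<bullet> w = 0}"
proof -
  have "{v::'a. \<forall>w\<in>K. v \<bullet> w = 0} = (\<Inter>w\<in>K. {v. w \<bullet> v = 0})"
    by (auto simp: inner_commute)
  then show ?thesis by (simp add: closed_INT closed_hyperplane)
qed

lemma eventually_concave_quadratic_le:
  fixes b c \<gamma> \<mu> :: real
  assumes "b < 0"
  shows "eventually (\<lambda>l. c + 2 * l * \<gamma> + l\<^sup>2 * b \<le> \<mu>) at_infinity"
proof -
  define R where "R = max 1 ((2 * \<bar>\<gamma>\<bar> + \<bar>c\<bar> + \<bar>\<mu>\<bar>) / - b)"
  have "c + 2 * l * \<gamma> + l\<^sup>2 * b \<le> \<mu>" if "R \<le> norm l" for l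
  proof -
    have "1 \<le> \<bar>l\<bar>" "2 * \<bar>\<gamma>\<bar> + \<bar>c\<bar> + \<bar>\<mu>\<bar> \<le> \<bar>l\<bar> * - b"
      using that assms unfolding R_def by (auto simp: field_simps)
    have "2 * l * \<gamma> \<le> \<bar>l\<bar> * (2 * \<bar>\<gamma>\<bar>)"
      using abs_ge_self[of "l * \<gamma>"] by (simp add: abs_mult)
    moreover have "c - \<mu> \<le> \<bar>l\<bar> * (\<bar>c\<bar> + \<bar>\<mu>\<bar>)"
      using mult_right_mono[OF \<open>1 \<le> \<bar>l\<bar>\<close>, of "\<bar>c\<bar> + \<bar>\<mu>\<bar>"] by simp
    ultimately have "c + 2 * l * \<gamma> - \<mu> \<le> \<bar>l\<bar> * (2 * \<bar>\<gamma>\<bar> + \<bar>c\<bar> + \<bar>\<mu>\<bar>)"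
      by (simp add: algebra_simps)
    also have "\<dots> \<le> \<bar>l\<bar> * (\<bar>l\<bar> * - b)"
      by (rule mult_left_mono) (fact, simp)
    also have "\<dots> = - (l\<^sup>2 * b)" by (simp add: power2_eq_square abs_mult_self_eq)
    finally show ?thesis by simp
  qed
  then show ?thesis unfolding eventually_at_infinity by blast
qed

lemma affine_eventually_bounded_below_imp_slope_zero:
  fixes \<beta> c L :: real
  assumes "eventually (\<lambda>l. L \<le> c + l * \<beta>) at_infinity"
  shows "\<beta> = 0"
proof (rule ccontr)
  assume "\<beta> \<noteq> 0"
  obtain R where R: "\<And>l. R \<le> norm l \<Longrightarrow> L \<le> c + l * \<beta>"
    using assms unfolding eventually_at_infinity by blast
  define r where "r = max R ((\<bar>c\<bar> + \<bar>L\<bar> + 1) / \<bar>\<beta>\<bar>)"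
  have "L \<le> c + (- sgn \<beta> * r) * \<beta>"
    using R[of "- sgn \<beta> * r"] \<open>\<beta> \<noteq> 0\<close> unfolding r_def by (simp add: abs_mult)
  moreover have "(- sgn \<beta> * r) * \<beta> = - r * \<bar>\<beta>\<bar>"
    by (simp add: abs_sgn mult_ac)
  moreover have "(\<bar>c\<bar> + \<bar>L\<bar> + 1) / \<bar>\<beta>\<bar> \<le> r" unfolding r_def by simp
  then have "\<bar>c\<bar> + \<bar>L\<bar> + 1 \<le> r * \<bar>\<beta>\<bar>"
    using \<open>\<beta> \<noteq> 0\<close> by (simp add: pos_divide_le_eq)
  ultimately show False by linarith
qed

locale qp1qc_bounded_below =
  fixes A B :: "real^'n^'n" and f g :: "real^'n" and \<mu> L :: real and x0 :: "real^'n"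
  assumes symmetric_A: "symmetric_mat A" and symmetric_B: "symmetric_mat B"
    and feasible_x0: "qform B g x0 \<le> \<mu>"
    and lower_bound: "\<And>x. qform B g x \<le> \<mu> \<Longrightarrow> L \<le> qform A f x"
begin

definition is_minimizer :: "real^'n \<Rightarrow> bool" where
  "is_minimizer x \<longleftrightarrow>
     qform B g x \<le> \<mu> \<and> (\<forall>y. qform B g y \<le> \<mu> \<longrightarrow> qform A f x \<le> qform A f y)"

definition common_kernel :: "(real^'n) set" where
  "common_kernel = {w. A *v w = 0 \<and> B *v w = 0}"

lemma subspace_common_kernel: "subspace common_kernel"
  unfolding common_kernel_def subspace_def by (simp add: algebra_simps)

lemma inner_f_common_kernel:
  assumes "A *v w = 0" "B *v w = 0" "g \<bullet> w = 0"
  shows "f \<bullet> w = 0"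
proof -
  have "L \<le> qform A f x0 + l * (- 2 * (f \<bullet> w))" for l
  proof -
    have "A *v (l *\<^sub>R w) = 0" "B *v (l *\<^sub>R w) = 0"
      using assms(1,2) by (simp_all add: matrix_vector_mult_scaleR)
    then have "qform B g (x0 + l *\<^sub>R w) = qform B g x0"
      and "qform A f (x0 + l *\<^sub>R w) = qform A f x0 + l * (- 2 * (f \<bullet> w))"
      using qform_add_kernel[OF symmetric_B] qform_add_kernel[OF symmetric_A] assms(3) by simp_all
    then show ?thesis using lower_bound[of "x0 + l *\<^sub>R w"] feasible_x0 by simp
  qed
  then have "- 2 * (f \<bullet> w) = 0"
    by (intro affine_eventually_bounded_below_imp_slope_zero) (rule always_eventually, blast)
  then show ?thesis by simp
qed

lemma objective_flat_if_A_isotropic_B_negative: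
  assumes "d \<bullet> (A *v d) = 0" "d \<bullet> (B *v d) < 0"
  shows "A *v d = 0 \<and> f \<bullet> d = 0"
proof -
  have slope: "d \<bullet> (A *v x) - f \<bullet> d = 0" for x
  proof -
    have "eventually (\<lambda>l. qform B g (x + l *\<^sub>R d) \<le> \<mu>) at_infinity"
      using eventually_concave_quadratic_le[OF assms(2)] by (simp add: qform_add_scaleR[OF symmetric_B])
    then have "eventually (\<lambda>l. L \<le> qform A f x + l * (2 * (d \<bullet> (A *v x) - f \<bullet> d))) at_infinity"
    proof eventually_elim
      case (elim l)
      then have "L \<le> qform A f (x + l *\<^sub>R d)" by (rule lower_bound)
      then show ?case by (simp add: qform_add_scaleR[OF symmetric_A] assms(1) algebra_simps)
    qed
    then show ?thesis using affine_eventually_bounded_below_imp_slope_zero by fastforce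
  qed
  have "f \<bullet> d = 0" using slope[of 0] by simp
  moreover have "(A *v d) \<bullet> (A *v d) = 0"
    using slope[of "A *v d"] symmetric_mat_inner_commute[OF symmetric_A, of d "A *v d"] \<open>f \<bullet> d = 0\<close>
    by simp
  ultimately show ?thesis by simp
qed

context
  fixes s t :: real
  assumes distinct_st: "s \<noteq> t"
    and psd_s: "psd (A + s *\<^sub>R B)" and psd_t: "psd (A + t *\<^sub>R B)"
    and no_flat_feasible_direction: "\<And>d. A *v d = 0 \<Longrightarrow> f \<bullet> d = 0 \<Longrightarrow> 0 \<le> d \<bullet> (B *v d)"
    and inner_g_common_kernel: "\<And>w. w \<in> common_kernel \<Longrightarrow> g \<bullet> w = 0"
begin

lemma qform_add_common_kernel:
  assumes "k \<in> common_kernel"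
  shows "qform A f (x + k) = qform A f x" "qform B g (x + k) = qform B g x"
  using assms inner_g_common_kernel[OF assms] inner_f_common_kernel
    qform_add_kernel[OF symmetric_A] qform_add_kernel[OF symmetric_B]
  unfolding common_kernel_def by auto

lemma max_quadratic_pos_orthogonal_common_kernel:
  assumes "\<forall>w\<in>common_kernel. d \<bullet> w = 0" "d \<noteq> 0"
  shows "0 < max \<bar>d \<bullet> (A *v d)\<bar> (d \<bullet> (B *v d))"
proof (rule ccontr)
  assume "\<not> ?thesis"
  then have A0: "d \<bullet> (A *v d) = 0" and "d \<bullet> (B *v d) \<le> 0" by auto
  have "d \<notin> common_kernel" using assms by auto
  show False
  proof (cases "d \<bullet> (B *v d) = 0")
    case True
    then show ?thesis
      using psd_pair_isotropic_imp_kernel[OF symmetric_A symmetric_B distinct_st psd_s psd_t A0]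
        \<open>d \<notin> common_kernel\<close> unfolding common_kernel_def by simp
  next
    case False
    then have "d \<bullet> (B *v d) < 0" using \<open>d \<bullet> (B *v d) \<le> 0\<close> by simp
    then show ?thesis
      using objective_flat_if_A_isotropic_B_negative[OF A0] no_flat_feasible_direction by force
  qed
qed

lemma uniform_max_quadratic_orthogonal_common_kernel:
  obtains \<epsilon> where "\<epsilon> > 0"
    "\<And>v. \<forall>w\<in>common_kernel. v \<bullet> w = 0 \<Longrightarrow> \<epsilon> * (norm v)\<^sup>2 \<le> max \<bar>v \<bullet> (A *v v)\<bar> (v \<bullet> (B *v v))"
proof -
  define U where "U = sphere 0 1 \<inter> {v. \<forall>w\<in>common_kernel. v \<bullet> w = 0}"
  define \<psi> where "\<psi> v = max \<bar>v \<bullet> (A *v v)\<bar> (v \<bullet> (B *v v))" for v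
  have "compact U"
    unfolding U_def by (intro compact_Int_closed compact_sphere closed_orthogonal_set)
  have "\<exists>\<epsilon>>0. \<forall>d\<in>U. \<epsilon> \<le> \<psi> d"
  proof (cases "U = {}")
    case False
    have "continuous_on U \<psi>" unfolding \<psi>_def by (intro continuous_intros)
    then obtain d0 where "d0 \<in> U" "\<forall>d\<in>U. \<psi> d0 \<le> \<psi> d"
      using continuous_attains_inf[OF \<open>compact U\<close> False] by blast
    moreover have "d0 \<noteq> 0" "\<forall>w\<in>common_kernel. d0 \<bullet> w = 0"
      using \<open>d0 \<in> U\<close> unfolding U_def by auto
    then have "0 < \<psi> d0"
      unfolding \<psi>_def by (rule max_quadratic_pos_orthogonal_common_kernel[rotated])
    ultimately show ?thesis by blast
  qed (auto intro!: exI[of _ 1])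
  then obtain \<epsilon> where "\<epsilon> > 0" and \<epsilon>: "\<And>d. d \<in> U \<Longrightarrow> \<epsilon> \<le> \<psi> d" by blast
  have "\<epsilon> * (norm v)\<^sup>2 \<le> \<psi> v" if "\<forall>w\<in>common_kernel. v \<bullet> w = 0" for v
  proof (cases "v = 0")
    case False
    define r where "r = norm v"
    define d where "d = (1 / r) *\<^sub>R v"
    have "d \<in> U" using that False unfolding U_def d_def r_def by (auto simp: inner_scaleR_left)
    have "v = r *\<^sub>R d" using False unfolding d_def r_def by simp
    then have "v \<bullet> (M *v v) = r\<^sup>2 * (d \<bullet> (M *v d))" for M :: "real^'n^'n"
      by (simp add: matrix_vector_mult_scaleR power2_eq_square)
    then have "\<psi> v = r\<^sup>2 * \<psi> d"
      unfolding \<psi>_def by (simp add: abs_mult max_mult_distrib_left)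
    then show ?thesis
      using mult_right_mono[OF \<epsilon>[OF \<open>d \<in> U\<close>], of "r\<^sup>2"] unfolding r_def by (simp add: mult.commute)
  qed (simp add: \<psi>_def)
  then show ?thesis using that \<open>\<epsilon> > 0\<close> unfolding \<psi>_def by blast
qed


lemma bounded_sublevel_orthogonal_common_kernel:
  "bounded {v. (\<forall>w\<in>common_kernel. v \<bullet> w = 0) \<and> qform B g v \<le> \<mu> \<and> qform A f v \<le> c}"
proof -
  obtain \<epsilon> where "\<epsilon> > 0" and \<epsilon>: "\<And>v. \<forall>w\<in>common_kernel. v \<bullet> w = 0 \<Longrightarrow>
      \<epsilon> * (norm v)\<^sup>2 \<le> max \<bar>v \<bullet> (A *v v)\<bar> (v \<bullet> (B *v v))"
    using uniform_max_quadratic_orthogonal_common_kernel by blast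
  define C where "C = \<bar>L\<bar> + \<bar>c\<bar> + \<bar>\<mu>\<bar>"
  define D where "D = 2 * (norm f + norm g)"
  have "norm v \<le> max 1 ((C + D) / \<epsilon>)"
    if v: "\<forall>w\<in>common_kernel. v \<bullet> w = 0" "qform B g v \<le> \<mu>" "qform A f v \<le> c" for v
  proof (cases "norm v \<le> 1")
    case False
    define r where "r = norm v"
    have "r > 1" using False unfolding r_def by simp
    have "\<bar>f \<bullet> v\<bar> \<le> norm f * r" "\<bar>g \<bullet> v\<bar> \<le> norm g * r"
      unfolding r_def by (rule Cauchy_Schwarz_ineq2)+
    moreover have "L \<le> qform A f v" using lower_bound v(2) .
    moreover have "0 \<le> norm f * r" "0 \<le> norm g * r" using \<open>r > 1\<close> by simp_all
    moreover have "D * r = 2 * (norm f * r) + 2 * (norm g * r)"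
      unfolding D_def by (simp add: algebra_simps)
    ultimately have "\<bar>v \<bullet> (A *v v)\<bar> \<le> C + D * r" "v \<bullet> (B *v v) \<le> C + D * r"
      using v(2,3) unfolding C_def qform_def abs_le_iff by linarith+
    then have "\<epsilon> * r\<^sup>2 \<le> C + D * r" using \<epsilon>[OF v(1)] unfolding r_def by simp
    also have "\<dots> \<le> (C + D) * r"
      using \<open>r > 1\<close> mult_left_mono[of 1 r C] unfolding C_def by (simp add: distrib_right)
    finally have "(\<epsilon> * r) * r \<le> (C + D) * r" by (simp add: power2_eq_square mult.assoc)
    then have "\<epsilon> * r \<le> C + D"
      using \<open>r > 1\<close> by (simp add: mult_le_cancel_right_pos)
    then have "r \<le> (C + D) / \<epsilon>"
      using \<open>\<epsilon> > 0\<close> by (simp add: pos_le_divide_eq mult.commute)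
    then show ?thesis unfolding r_def by simp
  qed simp
  then show ?thesis unfolding bounded_iff by blast
qed

lemma exists_minimizer_nondegenerate: "\<exists>x. is_minimizer x"
proof -
  have projection: "\<exists>k\<in>common_kernel. \<forall>w\<in>common_kernel. (x - k) \<bullet> w = 0" for x
  proof -
    obtain k z where "k \<in> span common_kernel" "\<And>w. w \<in> span common_kernel \<Longrightarrow> orthogonal z w"
        "x = k + z"
      using orthogonal_subspace_decomp_exists by blast
    moreover have "span common_kernel = common_kernel"
      using subspace_common_kernel by (simp add: span_eq_iff)
    ultimately show ?thesis
      unfolding orthogonal_def by (intro bexI[of _ k]) auto
  qed
  have translate: "qform A f (x - k) = qform A f x" "qform B g (x - k) = qform B g x"
    if "k \<in> common_kernel" for x k
    using qform_add_common_kernel[of "- k" x] that subspace_common_kernel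
    by (simp_all add: subspace_neg)
  obtain k0 where "k0 \<in> common_kernel" and k0: "\<forall>w\<in>common_kernel. (x0 - k0) \<bullet> w = 0"
    using projection by blast
  define S where "S = {v. (\<forall>w\<in>common_kernel. v \<bullet> w = 0) \<and> qform B g v \<le> \<mu> \<and>
    qform A f v \<le> qform A f x0}"
  have "x0 - k0 \<in> S"
    unfolding S_def using k0 feasible_x0 translate[OF \<open>k0 \<in> common_kernel\<close>] by simp
  have "compact S"
  proof -
    have "S = {v. \<forall>w\<in>common_kernel. v \<bullet> w = 0} \<inter> {v. qform B g v \<le> \<mu>} \<inter>
        {v. qform A f v \<le> qform A f x0}"
      unfolding S_def by auto
    then have "closed S"
      by (simp add: closed_Int closed_orthogonal_set closed_Collect_le continuous_on_qform)
    then show ?thesis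
      unfolding S_def by (simp add: compact_eq_bounded_closed bounded_sublevel_orthogonal_common_kernel)
  qed
  moreover have "S \<noteq> {}" using \<open>x0 - k0 \<in> S\<close> by blast
  ultimately obtain xs where "xs \<in> S" and xs: "\<And>y. y \<in> S \<Longrightarrow> qform A f xs \<le> qform A f y"
    using continuous_attains_inf[OF _ _ continuous_on_qform] by metis
  have "qform A f xs \<le> qform A f y" if "qform B g y \<le> \<mu>" for y
  proof (cases "qform A f y \<le> qform A f x0")
    case True
    obtain k where "k \<in> common_kernel" "\<forall>w\<in>common_kernel. (y - k) \<bullet> w = 0"
      using projection by blast
    then have "y - k \<in> S" unfolding S_def using True that translate by simp
    then show ?thesis using xs translate(1)[OF \<open>k \<in> common_kernel\<close>] by metis
  next
    case False
    then show ?thesis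
      using xs[OF \<open>x0 - k0 \<in> S\<close>] translate[OF \<open>k0 \<in> common_kernel\<close>] by simp
  qed
  then show ?thesis using \<open>xs \<in> S\<close> unfolding is_minimizer_def S_def by blast
qed

end

end

lemma psd_if_qform_bounded_below:
  fixes M :: "real^'n^'n"
  assumes bounded: "\<And>x. L \<le> qform M h x"
  shows "psd M"
  unfolding psd_def
proof (rule allI, rule ccontr)
  fix x assume "\<not> 0 \<le> x \<bullet> (M *v x)"
  then have "eventually (\<lambda>l. 0 + 2 * l * - (h \<bullet> x) + l\<^sup>2 * (x \<bullet> (M *v x)) \<le> L - 1) at_infinity"
    by (intro eventually_concave_quadratic_le) simp
  then obtain l where "0 + 2 * l * - (h \<bullet> x) + l\<^sup>2 * (x \<bullet> (M *v x)) \<le> L - 1"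
    using eventually_happens'[OF trivial_limit_at_infinity] by blast
  moreover have "qform M h (l *\<^sub>R x) = 0 + 2 * l * - (h \<bullet> x) + l\<^sup>2 * (x \<bullet> (M *v x))"
    unfolding qform_def by (simp add: matrix_vector_mult_scaleR power2_eq_square)
  ultimately show False using bounded[of "l *\<^sub>R x"] by simp
qed

lemma qform_bounded_below_imp_has_min:
  fixes M :: "real^'n^'n"
  assumes sym: "symmetric_mat M" and bounded: "\<And>x. L \<le> qform M h x"
  shows "\<exists>x. \<forall>y. qform M h x \<le> qform M h y"
proof -
  have sym0: "symmetric_mat (0 :: real^'n^'n)"
    unfolding symmetric_mat_def transpose_def by (simp add: vec_eq_iff)
  \<comment> \<open>Unconstrained minimization is the case B = 0, g = 0 of the nondegenerate case.\<close>
  interpret unconstrained: qp1qc_bounded_below M 0 h 0 0 L 0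
    using sym sym0 bounded by unfold_locales (simp_all add: qform_def)
  have "psd (M + 0 *\<^sub>R 0)" "psd (M + 1 *\<^sub>R 0)"
    using psd_if_qform_bounded_below[OF bounded] by simp_all
  then have "\<exists>x. unconstrained.is_minimizer x"
    by (intro unconstrained.exists_minimizer_nondegenerate[of 0 1]) simp_all
  then show ?thesis unfolding unconstrained.is_minimizer_def by (simp add: qform_def)
qed

context qp1qc_bounded_below
begin

lemma exists_minimizer_if_flat_feasible_direction:
  assumes "A *v d = 0" "f \<bullet> d = 0" "d \<bullet> (B *v d) < 0"
  shows "\<exists>x. is_minimizer x"
proof -
  have "\<exists>l. qform B g (x + l *\<^sub>R d) \<le> \<mu> \<and> qform A f (x + l *\<^sub>R d) = qform A f x" for x
  proof -
    have "eventually (\<lambda>l. qform B g (x + l *\<^sub>R d) \<le> \<mu>) at_infinity"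
      using eventually_concave_quadratic_le[OF assms(3)] by (simp add: qform_add_scaleR[OF symmetric_B])
    then obtain l where "qform B g (x + l *\<^sub>R d) \<le> \<mu>"
      using eventually_happens'[OF trivial_limit_at_infinity] by blast
    moreover have "A *v (l *\<^sub>R d) = 0" using assms(1) by (simp add: matrix_vector_mult_scaleR)
    then have "qform A f (x + l *\<^sub>R d) = qform A f x"
      using qform_add_kernel[OF symmetric_A] assms(2) by simp
    ultimately show ?thesis by blast
  qed
  then obtain shift where shift: "\<And>x. qform B g (x + shift x *\<^sub>R d) \<le> \<mu>"
      "\<And>x. qform A f (x + shift x *\<^sub>R d) = qform A f x"
    by metis
  have "L \<le> qform A f x" for x using lower_bound[OF shift(1)] shift(2) by simp
  then obtain x where "\<forall>y. qform A f x \<le> qform A f y"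
    using qform_bounded_below_imp_has_min[OF symmetric_A] by blast
  then have "is_minimizer (x + shift x *\<^sub>R d)"
    unfolding is_minimizer_def using shift by simp
  then show ?thesis ..
qed


lemma exists_minimizer_if_common_kernel_moves_constraint:
  assumes "A *v w = 0" "B *v w = 0" "g \<bullet> w \<noteq> 0"
  shows "\<exists>x. is_minimizer x"
proof -
  define u where "u = (1 / (g \<bullet> w)) *\<^sub>R w"
  define \<gamma> where "\<gamma> = - (f \<bullet> u)"
  have "A *v (l *\<^sub>R u) = 0" "B *v (l *\<^sub>R u) = 0" "g \<bullet> (l *\<^sub>R u) = l" for l
    using assms unfolding u_def by (simp_all add: matrix_vector_mult_scaleR)
  then have shift_B: "qform B g (x + l *\<^sub>R u) = qform B g x - 2 * l"
    and shift_A: "qform A f (x + l *\<^sub>R u) = qform A f x + 2 * l * \<gamma>" for x l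
    using qform_add_kernel[OF symmetric_B] qform_add_kernel[OF symmetric_A]
    unfolding \<gamma>_def by simp_all
  have "\<gamma> \<ge> 0"
  proof (rule ccontr)
    assume "\<not> \<gamma> \<ge> 0"
    define l where "l = (\<bar>qform A f x0\<bar> + \<bar>L\<bar> + 1) / (- 2 * \<gamma>)"
    have "l \<ge> 0" "2 * l * \<gamma> = - (\<bar>qform A f x0\<bar> + \<bar>L\<bar> + 1)"
      using \<open>\<not> \<gamma> \<ge> 0\<close> unfolding l_def by (simp_all add: divide_nonneg_neg field_simps)
    moreover have "L \<le> qform A f (x0 + l *\<^sub>R u)"
      using lower_bound shift_B feasible_x0 \<open>l \<ge> 0\<close> by simp
    ultimately show False using shift_A by simp
  qed
  define F where "F = qform (A + \<gamma> *\<^sub>R B) (f + \<gamma> *\<^sub>R g)"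
  define onto_boundary where "onto_boundary x = x + ((qform B g x - \<mu>) / 2) *\<^sub>R u" for x
  have on_boundary: "qform B g (onto_boundary x) = \<mu>"
    and F_boundary: "qform A f (onto_boundary x) = F x - \<gamma> * \<mu>" for x
    unfolding onto_boundary_def F_def shift_A shift_B qform_add_scaleR_matrix
    by (simp_all add: field_simps)
  have "L + \<gamma> * \<mu> \<le> F x" for x
    using lower_bound[of "onto_boundary x"] on_boundary F_boundary by simp
  then obtain xs where xs: "\<forall>y. F xs \<le> F y"
    using qform_bounded_below_imp_has_min[OF symmetric_mat_add_scaleR[OF symmetric_A symmetric_B]]
    unfolding F_def by blast
  have "qform A f (onto_boundary xs) \<le> qform A f y" if "qform B g y \<le> \<mu>" for y
  proof -
    have "qform A f (onto_boundary xs) \<le> F y - \<gamma> * \<mu>" using xs F_boundary by simp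
    also have "\<dots> = qform A f y + \<gamma> * (qform B g y - \<mu>)"
      unfolding F_def qform_add_scaleR_matrix by (simp add: algebra_simps)
    also have "\<dots> \<le> qform A f y" using \<open>\<gamma> \<ge> 0\<close> that by (simp add: mult_nonneg_nonpos)
    finally show ?thesis .
  qed
  then have "is_minimizer (onto_boundary xs)" unfolding is_minimizer_def using on_boundary by simp
  then show ?thesis ..
qed

lemma exists_minimizer:
  assumes "s \<noteq> t" "psd (A + s *\<^sub>R B)" "psd (A + t *\<^sub>R B)"
  shows "\<exists>x. is_minimizer x"
proof (cases "\<exists>d. A *v d = 0 \<and> f \<bullet> d = 0 \<and> d \<bullet> (B *v d) < 0")
  case True
  then show ?thesis using exists_minimizer_if_flat_feasible_direction by blast
next
  case no_descent: False
  show ?thesis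
  proof (cases "\<exists>w. A *v w = 0 \<and> B *v w = 0 \<and> g \<bullet> w \<noteq> 0")
    case True
    then show ?thesis using exists_minimizer_if_common_kernel_moves_constraint by blast
  next
    case False
    have "0 \<le> d \<bullet> (B *v d)" if "A *v d = 0" "f \<bullet> d = 0" for d
      using no_descent that by force
    moreover have "g \<bullet> w = 0" if "w \<in> common_kernel" for w
      using False that unfolding common_kernel_def by blast
    ultimately show ?thesis by (rule exists_minimizer_nondegenerate[OF assms])
  qed
qed

end

theorem theorem6:
  fixes A B :: "real^'n^'n" and f g :: "real^'n" and \<mu> :: real
  assumes "symmetric_mat A" and "symmetric_mat B"
    and slater: "\<exists>x0. qform B g x0 < \<mu>"
    and finite_val: "bdd_below ((qform A f) ` {x. qform B g x \<le> \<mu>})"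
    and interval: "is_interval (I_psd A B)"
    and nontriv: "\<exists>s\<in>I_psd A B. \<exists>t\<in>I_psd A B. s \<noteq> t"
  shows "\<exists>x. qform B g x \<le> \<mu> \<and>
           qform A f x = (INF y\<in>{y. qform B g y \<le> \<mu>}. qform A f y)"
proof -
  obtain s t where "s \<noteq> t" "psd (A + s *\<^sub>R B)" "psd (A + t *\<^sub>R B)"
    using nontriv unfolding I_psd_def by blast
  obtain x0 where "qform B g x0 \<le> \<mu>" using slater less_imp_le by blast
  obtain L where "\<And>x. qform B g x \<le> \<mu> \<Longrightarrow> L \<le> qform A f x"
    using finite_val unfolding bdd_below_def by auto
  then interpret qp1qc_bounded_below A B f g \<mu> L x0
    using assms(1,2) \<open>qform B g x0 \<le> \<mu>\<close> by unfold_locales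
  obtain x where "is_minimizer x"
    using exists_minimizer[OF \<open>s \<noteq> t\<close> \<open>psd (A + s *\<^sub>R B)\<close> \<open>psd (A + t *\<^sub>R B)\<close>] by blast
  then have "(INF y\<in>{y. qform B g y \<le> \<mu>}. qform A f y) = qform A f x"
    unfolding is_minimizer_def by (intro cInf_eq_minimum) auto
  with \<open>is_minimizer x\<close> show ?thesis unfolding is_minimizer_def by auto
qed

end
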